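(* Let $T:X\rightrightarrows X^*$ be a monotone operator. Then $T$ is maximal pseudomonotone if and only if $T=X\times\{0\}$.
   Context: $X$ is a real Banach space with dual $X^*$ and pairing $\langle x,x^*\rangle=x^*(x)$. A multivalued operator $T:X\rightrightarrows X^*$ is identified with its graph $T\subset X\times X^*$. $T$ is monotone if $\langle x-y,x^*-y^*\rangle\ge0$ for all $(x,x^* ),(y,y^* )\in T$. $T$ is pseudomonotone if for all $(x,x^* ),(y,y^* )\in T$, $\langle y-x,x^*\rangle\ge0$ implies $\langle y-x,y^*\rangle\ge0$. $T$ is maximal pseudomonotone if it is pseudomonotone and for every pseudomonotone $S$ with $T\subset S$ one has $S=T$. *)

theory Defs
  imports "HOL-Analysis.Analysis"
begin

text \<open>A multivalued operator is identified with its graph.\<close>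

definition monotone_op :: "('a::banach \<times> ('a \<Rightarrow>\<^sub>L real)) set \<Rightarrow> bool" where
  "monotone_op T \<longleftrightarrow>
     (\<forall>x xs y ys. (x, xs) \<in> T \<longrightarrow> (y, ys) \<in> T \<longrightarrow> blinfun_apply (xs - ys) (x - y) \<ge> 0)"

definition pseudomonotone_op :: "('a::banach \<times> ('a \<Rightarrow>\<^sub>L real)) set \<Rightarrow> bool" where
  "pseudomonotone_op T \<longleftrightarrow>
     (\<forall>x xs y ys. (x, xs) \<in> T \<longrightarrow> (y, ys) \<in> T \<longrightarrow>
        blinfun_apply xs (y - x) \<ge> 0 \<longrightarrow> blinfun_apply ys (y - x) \<ge> 0)"

definition maximal_pseudomonotone_op :: "('a::banach \<times> ('a \<Rightarrow>\<^sub>L real)) set \<Rightarrow> bool" where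
  "maximal_pseudomonotone_op T \<longleftrightarrow>
     pseudomonotone_op T \<and> (\<forall>S. pseudomonotone_op S \<and> T \<subseteq> S \<longrightarrow> S = T)"

end

theory Submission
  imports Defs
begin

text \<open>Maximality makes the values of a maximal pseudomonotone operator \<open>T\<close> closed under
positive scaling. If \<open>T\<close> is also monotone, scaling \<open>y\<^sup>*\<close> in \<open>\<langle>x - y, x\<^sup>* - t y\<^sup>*\<rangle> \<ge> 0\<close>
forces \<open>\<langle>x - y, x\<^sup>*\<rangle> \<ge> 0\<close> for all \<open>(x, x\<^sup>*), (y, y\<^sup>*) \<in> T\<close>. Then \<open>(z, x\<^sup>*)\<close> can be
added to \<open>T\<close> for every \<open>z\<close> with \<open>\<langle>z - x, x\<^sup>*\<rangle> > 0\<close>, which contradicts that inequality unless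
\<open>x\<^sup>* = 0\<close>; once all values vanish, every \<open>(z, 0)\<close> can be added. Conversely, a pair \<open>(x, x\<^sup>*)\<close>
compatible with all of \<open>X \<times> {0}\<close> satisfies \<open>\<langle>x - y, x\<^sup>*\<rangle> \<ge> 0\<close> for all \<open>y\<close>, so \<open>x\<^sup>* = 0\<close>.\<close>

lemma pseudomonotone_op_insert:
  assumes "pseudomonotone_op T"
    and "\<And>x xs. (x, xs) \<in> T \<Longrightarrow>
           (blinfun_apply xs (z - x) \<ge> 0 \<longrightarrow> blinfun_apply zs (z - x) \<ge> 0) \<and>
           (blinfun_apply zs (x - z) \<ge> 0 \<longrightarrow> blinfun_apply xs (x - z) \<ge> 0)"
  shows "pseudomonotone_op (insert (z, zs) T)"
  using assms unfolding pseudomonotone_op_def by auto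

lemma maximal_pseudomonotone_op_imp_pseudomonotone_op:
  "maximal_pseudomonotone_op T \<Longrightarrow> pseudomonotone_op T"
  unfolding maximal_pseudomonotone_op_def by blast

lemma maximal_pseudomonotone_op_insert_mem:
  assumes "maximal_pseudomonotone_op T" "pseudomonotone_op (insert p T)"
  shows "p \<in> T"
  using assms unfolding maximal_pseudomonotone_op_def by blast

lemma maximal_pseudomonotone_op_scaleR:
  assumes max: "maximal_pseudomonotone_op T" and y: "(y, ys) \<in> T" and t: "t > 0"
  shows "(y, t *\<^sub>R ys) \<in> T"
proof -
  have pm: "pseudomonotone_op T"
    using max by (rule maximal_pseudomonotone_op_imp_pseudomonotone_op)
  have "pseudomonotone_op (insert (y, t *\<^sub>R ys) T)"
  proof (rule pseudomonotone_op_insert[OF pm])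
    fix x xs assume x: "(x, xs) \<in> T"
    have "blinfun_apply ys (x - y) \<ge> 0 \<longrightarrow> blinfun_apply xs (x - y) \<ge> 0"
      and "blinfun_apply xs (y - x) \<ge> 0 \<longrightarrow> blinfun_apply ys (y - x) \<ge> 0"
      using pm x y unfolding pseudomonotone_op_def by blast+
    then show "(blinfun_apply xs (y - x) \<ge> 0 \<longrightarrow> blinfun_apply (t *\<^sub>R ys) (y - x) \<ge> 0) \<and>
               (blinfun_apply (t *\<^sub>R ys) (x - y) \<ge> 0 \<longrightarrow> blinfun_apply xs (x - y) \<ge> 0)"
      using t by (auto simp: blinfun.scaleR_left zero_le_mult_iff)
  qed
  then show ?thesis
    by (rule maximal_pseudomonotone_op_insert_mem[OF max])
qed

lemma monotone_maximal_pseudomonotone_op_nonneg: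
  assumes mono: "monotone_op T" and max: "maximal_pseudomonotone_op T"
    and x: "(x, xs) \<in> T" and y: "(y, ys) \<in> T"
  shows "blinfun_apply xs (x - y) \<ge> 0"
proof (rule ccontr)
  define a where "a = blinfun_apply xs (x - y)"
  define c where "c = blinfun_apply ys (x - y)"
  assume "\<not> blinfun_apply xs (x - y) \<ge> 0"
  then have a: "a < 0" unfolding a_def by simp
  have bound: "t * c \<le> a" if "t > 0" for t :: real
  proof -
    have "(y, t *\<^sub>R ys) \<in> T"
      using max y that by (rule maximal_pseudomonotone_op_scaleR)
    with mono x have "blinfun_apply (xs - t *\<^sub>R ys) (x - y) \<ge> 0"
      unfolding monotone_op_def by blast
    then show ?thesis
      unfolding a_def c_def by (simp add: blinfun.diff_left blinfun.scaleR_left)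
  qed
  from bound[of 1] a have c: "c < 0" by simp
  have "(a / (2 * c)) * c \<le> a"
    using bound[of "a / (2 * c)"] a c by (simp add: divide_neg_neg)
  moreover have "(a / (2 * c)) * c = a / 2"
    using c by (simp add: field_simps)
  ultimately show False using a by simp
qed

lemma blinfun_ex_pos_increment:
  fixes f :: "'a::real_normed_vector \<Rightarrow>\<^sub>L real"
  assumes "f \<noteq> 0"
  obtains z where "blinfun_apply f (z - x) > 0"
proof -
  obtain w where w: "blinfun_apply f w \<noteq> 0"
    using assms by (metis blinfun_eqI blinfun.zero_left)
  have "blinfun_apply f ((x + blinfun_apply f w *\<^sub>R w) - x) > 0"
    using w by (auto simp: blinfun.scaleR_right zero_less_mult_iff linorder_neq_iff)
  then show ?thesis by (rule that)
qed

lemma monotone_maximal_pseudomonotone_op_value_zero: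
  assumes mono: "monotone_op T" and max: "maximal_pseudomonotone_op T" and x: "(x, xs) \<in> T"
  shows "xs = 0"
proof (rule ccontr)
  assume "xs \<noteq> 0"
  then obtain z where pos: "blinfun_apply xs (z - x) > 0"
    by (rule blinfun_ex_pos_increment)
  have pm: "pseudomonotone_op T"
    using max by (rule maximal_pseudomonotone_op_imp_pseudomonotone_op)
  have "pseudomonotone_op (insert (z, xs) T)"
  proof (rule pseudomonotone_op_insert[OF pm])
    fix y ys assume y: "(y, ys) \<in> T"
    have "blinfun_apply xs (x - y) \<ge> 0"
      using mono max x y by (rule monotone_maximal_pseudomonotone_op_nonneg)
    moreover have "blinfun_apply xs (z - y) = blinfun_apply xs (z - x) + blinfun_apply xs (x - y)"
      by (metis blinfun.add_right diff_add_cancel add_diff_eq)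
    moreover have "blinfun_apply xs (y - z) = - blinfun_apply xs (z - y)"
      by (metis blinfun.minus_right minus_diff_eq)
    ultimately show "(blinfun_apply ys (z - y) \<ge> 0 \<longrightarrow> blinfun_apply xs (z - y) \<ge> 0) \<and>
                     (blinfun_apply xs (y - z) \<ge> 0 \<longrightarrow> blinfun_apply ys (y - z) \<ge> 0)"
      using pos by linarith
  qed
  then have "(z, xs) \<in> T"
    by (rule maximal_pseudomonotone_op_insert_mem[OF max])
  with mono max x have "blinfun_apply xs (x - z) \<ge> 0"
    by (rule monotone_maximal_pseudomonotone_op_nonneg)
  moreover have "blinfun_apply xs (x - z) = - blinfun_apply xs (z - x)"
    by (metis blinfun.minus_right minus_diff_eq)
  ultimately show False using pos by linarith
qed

lemma maximal_pseudomonotone_op_zero_valued: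
  assumes max: "maximal_pseudomonotone_op T" and zero: "\<And>x xs. (x, xs) \<in> T \<Longrightarrow> xs = 0"
  shows "T = UNIV \<times> {0}"
proof -
  have "(z, 0) \<in> T" for z
  proof -
    have "pseudomonotone_op T"
      using max by (rule maximal_pseudomonotone_op_imp_pseudomonotone_op)
    then have "pseudomonotone_op (insert (z, 0) T)"
      by (rule pseudomonotone_op_insert) (auto dest: zero)
    then show ?thesis
      by (rule maximal_pseudomonotone_op_insert_mem[OF max])
  qed
  then show ?thesis using zero by auto
qed

lemma blinfun_eq_0_if_nonneg:
  fixes f :: "'a::real_normed_vector \<Rightarrow>\<^sub>L real"
  assumes "\<And>v. blinfun_apply f v \<ge> 0"
  shows "f = 0"
proof (rule blinfun_eqI)
  fix v
  have "blinfun_apply f (- v) \<ge> 0" by (rule assms)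
  with assms[of v] show "blinfun_apply f v = blinfun_apply 0 v"
    by (simp add: blinfun.minus_right)
qed

lemma maximal_pseudomonotone_op_zero_operator:
  "maximal_pseudomonotone_op (UNIV \<times> {0 :: 'a::banach \<Rightarrow>\<^sub>L real})"
  unfolding maximal_pseudomonotone_op_def
proof (intro conjI allI impI)
  show "pseudomonotone_op (UNIV \<times> {0 :: 'a \<Rightarrow>\<^sub>L real})"
    unfolding pseudomonotone_op_def by simp
  fix S assume S: "pseudomonotone_op S \<and> UNIV \<times> {0 :: 'a \<Rightarrow>\<^sub>L real} \<subseteq> S"
  have zero: "xs = 0" if p: "(x, xs) \<in> S" for x xs
  proof (rule blinfun_eq_0_if_nonneg)
    fix v
    have "(x - v, 0) \<in> S" using S by auto
    then have "blinfun_apply xs (x - (x - v)) \<ge> 0"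
      using S p unfolding pseudomonotone_op_def by (metis blinfun.zero_left order_refl)
    then show "blinfun_apply xs v \<ge> 0" by simp
  qed
  show "S = UNIV \<times> {0}"
    using S by (auto dest: zero)
qed

theorem mainTheorem10:
  fixes T :: "('a::banach \<times> ('a \<Rightarrow>\<^sub>L real)) set"
  assumes "monotone_op T"
  shows "maximal_pseudomonotone_op T \<longleftrightarrow> T = UNIV \<times> {0}"
proof
  assume max: "maximal_pseudomonotone_op T"
  show "T = UNIV \<times> {0}"
    using max monotone_maximal_pseudomonotone_op_value_zero[OF assms max]
    by (rule maximal_pseudomonotone_op_zero_valued)
next
  assume "T = UNIV \<times> {0}"
  then show "maximal_pseudomonotone_op T"
    using maximal_pseudomonotone_op_zero_operator by simp
qed

end
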